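(* Let $\alpha > 1$ and let $H$ be a $k$-uniform hypergraph with $\lambda_\alpha(H) \ge \left(k!\binom{x}{k}\right)^{1-1/\alpha}$ for some real $x \ge k-1$. Then $e(\partial H) \ge \binom{x}{k-1}$.
   Context: For real $x$, $\binom{x}{m} = x(x-1)\cdots(x-m+1)/m!$. The shadow $\partial H$ of a $k$-uniform hypergraph $H$ is the $(k-1)$-uniform hypergraph consisting of all $(k-1)$-sets contained in some edge of $H$; $e(\cdot)$ denotes number of edges. For $H$ on $[n]$, $\tau_H(x,\dots,x) = k!\sum_{\{i_1,\dots,i_k\}\in E(H)} x_{i_1}\cdots x_{i_k}$ and $\lambda_\alpha(H) = \max\{\tau_H(x,\dots,x) : \|x\|_\alpha=1\}$, where $\|x\|_\alpha = (\sum_i|x_i|^\alpha)^{1/\alpha}$. *)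

theory Defs
  imports Complex_Main
begin

definition uniform_hypergraph :: "nat \<Rightarrow> nat \<Rightarrow> nat set set \<Rightarrow> bool" where
  "uniform_hypergraph n k E \<longleftrightarrow> (\<forall>e\<in>E. e \<subseteq> {..<n} \<and> card e = k)"

definition shadow :: "nat \<Rightarrow> nat set set \<Rightarrow> nat set set" where
  "shadow k E = {f. card f = k - 1 \<and> (\<exists>e\<in>E. f \<subseteq> e)}"

text \<open>tau_H(x,...,x) = k! * sum over edges of the product of the coordinates.\<close>
definition tau :: "nat \<Rightarrow> nat set set \<Rightarrow> (nat \<Rightarrow> real) \<Rightarrow> real" where
  "tau k E x = fact k * (\<Sum>e\<in>E. \<Prod>i\<in>e. x i)"

definition alpha_norm :: "nat \<Rightarrow> real \<Rightarrow> (nat \<Rightarrow> real) \<Rightarrow> real" where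
  "alpha_norm n \<alpha> x = (\<Sum>i<n. \<bar>x i\<bar> powr \<alpha>) powr (1 / \<alpha>)"

text \<open>lambda_alpha(H): maximum of tau over the unit alpha-sphere (attained by compactness).\<close>
definition lambda_alpha :: "nat \<Rightarrow> nat \<Rightarrow> real \<Rightarrow> nat set set \<Rightarrow> real" where
  "lambda_alpha n k \<alpha> E = Sup {tau k E x | x. alpha_norm n \<alpha> x = 1}"

end

theory Submission
  imports Defs "HOL-Analysis.Convex"
begin

text \<open>On the unit \<open>\<alpha>\<close>-sphere the weights
  \<open>w i = \<bar>y i\<bar> powr \<alpha>\<close> sum to 1, so \<open>k!\<close> times the sum over the edges of the products of
  the \<open>w i\<close> is at most \<open>1\<close>; the power mean inequality over the edges then gives
  \<open>\<lambda>\<^sub>\<alpha>(H) \<le> (k! e(H)) powr (1 - 1/\<alpha>)\<close>.  Hence the hypothesis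
  forces \<open>e(H) \<ge> x gchoose k\<close>, and Lov\'asz' form of the Kruskal--Katona theorem turns this
  into \<open>e(\<partial>H) \<ge> x gchoose (k - 1)\<close>.  The latter is proved by shifting the family towards a
  vertex \<open>a\<close> and inducting on \<open>k\<close> and on the size of the family.\<close>

subsection \<open>Shadows and shifting\<close>

definition uniform_family :: "nat \<Rightarrow> 'a set set \<Rightarrow> bool" where
  "uniform_family k F \<longleftrightarrow> finite F \<and> (\<forall>e\<in>F. finite e \<and> card e = k)"

definition lower_shadow :: "'a set set \<Rightarrow> 'a set set" where
  "lower_shadow F = {e - {x} | e x. e \<in> F \<and> x \<in> e}"

lemma finite_lower_shadow:
  assumes "uniform_family k F" shows "finite (lower_shadow F)"
proof -
  have "lower_shadow F = (\<Union>e\<in>F. (\<lambda>x. e - {x}) ` e)"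
    unfolding lower_shadow_def by auto
  then show ?thesis
    using assms unfolding uniform_family_def by auto
qed

lemma card_lower_shadow_ge:
  assumes "uniform_family k F" "e \<in> F" shows "k \<le> card (lower_shadow F)"
proof -
  have "(\<lambda>x. e - {x}) ` e \<subseteq> lower_shadow F"
    using assms(2) unfolding lower_shadow_def by auto
  moreover have "inj_on (\<lambda>x. e - {x}) e"
    by (rule inj_onI) auto
  ultimately have "card e \<le> card (lower_shadow F)"
    using finite_lower_shadow[OF assms(1)] by (metis card_image card_mono)
  then show ?thesis
    using assms unfolding uniform_family_def by auto
qed

definition shift :: "'a \<Rightarrow> 'a \<Rightarrow> 'a set \<Rightarrow> 'a set" where
  "shift a j e = insert a (e - {j})"

definition shiftable :: "'a \<Rightarrow> 'a \<Rightarrow> 'a set set \<Rightarrow> 'a set \<Rightarrow> bool" where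
  "shiftable a j F e \<longleftrightarrow> e \<in> F \<and> j \<in> e \<and> a \<notin> e \<and> shift a j e \<notin> F"

definition compression :: "'a \<Rightarrow> 'a \<Rightarrow> 'a set set \<Rightarrow> 'a set set" where
  "compression a j F = (\<lambda>e. if shiftable a j F e then shift a j e else e) ` F"

definition shift_stable :: "'a \<Rightarrow> 'a set set \<Rightarrow> bool" where
  "shift_stable a F \<longleftrightarrow> (\<forall>e\<in>F. \<forall>j\<in>e. a \<notin> e \<longrightarrow> shift a j e \<in> F)"

lemma shift_inj:
  assumes "j \<in> e" "a \<notin> e" "j \<in> e'" "a \<notin> e'" "shift a j e = shift a j e'"
  shows "e = e'"
proof -
  have "e = insert j (shift a j e - {a})" "e' = insert j (shift a j e' - {a})"
    using assms unfolding shift_def by auto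
  then show ?thesis
    using assms by simp
qed

lemma card_compression: "card (compression a j F) = card F"
  unfolding compression_def
proof (rule card_image, rule inj_onI)
  fix e e'
  assume "e \<in> F" "e' \<in> F"
    and eq: "(if shiftable a j F e then shift a j e else e)
           = (if shiftable a j F e' then shift a j e' else e')"
  then show "e = e'"
    using shift_inj[of j e a e'] unfolding shiftable_def by (auto split: if_splits)
qed

lemma compressionI_unshifted: "e \<in> F \<Longrightarrow> \<not> shiftable a j F e \<Longrightarrow> e \<in> compression a j F"
  unfolding compression_def by (rule image_eqI[where x = e]) auto

lemma compressionI_shifted: "shiftable a j F e \<Longrightarrow> shift a j e \<in> compression a j F"
  unfolding compression_def by (rule image_eqI[where x = e]) (auto simp: shiftable_def)

lemma compressionE:
  assumes "g \<in> compression a j F"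
  obtains "g \<in> F" "\<not> shiftable a j F g"
    | e where "shiftable a j F e" "g = shift a j e"
  using assms unfolding compression_def by (auto split: if_splits)

lemma uniform_family_compression:
  assumes "uniform_family k F" shows "uniform_family k (compression a j F)"
proof -
  have "finite g \<and> card g = k" if "g \<in> compression a j F" for g
    using that
  proof (cases rule: compressionE)
    case 1
    then show ?thesis using assms unfolding uniform_family_def by blast
  next
    case (2 e)
    then have "e \<in> F" "j \<in> e" "a \<notin> e"
      unfolding shiftable_def by auto
    with assms have "finite e" "card e = k"
      unfolding uniform_family_def by auto
    moreover have "0 < card e"
      using \<open>finite e\<close> \<open>j \<in> e\<close> card_gt_0_iff by blast
    ultimately show ?thesis
      using \<open>j \<in> e\<close> \<open>a \<notin> e\<close> unfolding \<open>g = shift a j e\<close> shift_def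
      by (auto simp: card_insert_if)
  qed
  moreover have "finite (compression a j F)"
    using assms unfolding compression_def uniform_family_def by simp
  ultimately show ?thesis
    unfolding uniform_family_def by blast
qed

lemma lower_shadow_compression_subset:
  "lower_shadow (compression a j F) \<subseteq> compression a j (lower_shadow F)"
proof
  fix g assume "g \<in> lower_shadow (compression a j F)"
  then obtain h x where h: "h \<in> compression a j F" "x \<in> h" "g = h - {x}"
    unfolding lower_shadow_def by auto
  from h(1) show "g \<in> compression a j (lower_shadow F)"
  proof (cases rule: compressionE)
    case 1
    have g: "g \<in> lower_shadow F"
      using 1 h unfolding lower_shadow_def by blast
    show ?thesis
    proof (cases "shiftable a j (lower_shadow F) g")
      case False
      then show ?thesis using compressionI_unshifted[OF g] by blast
    next
      case True
      then have g': "j \<in> g" "a \<notin> g" "shift a j g \<notin> lower_shadow F"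
        unfolding shiftable_def by auto
      have "shift a j g \<in> lower_shadow F"
      proof (cases "a \<in> h")
        case True
        with g' h have "shift a j g = h - {j}" "j \<in> h"
          unfolding shift_def by auto
        with 1 show ?thesis unfolding lower_shadow_def by blast
      next
        case False
        with 1 g' h have "shift a j h \<in> F"
          unfolding shiftable_def by auto
        moreover have "shift a j g = shift a j h - {x}" "x \<in> shift a j h"
          using h g' False unfolding shift_def by auto
        ultimately show ?thesis unfolding lower_shadow_def by blast
      qed
      with g' show ?thesis by blast
    qed
  next
    case (2 e)
    then have e: "e \<in> F" "j \<in> e" "a \<notin> e" "shift a j e \<notin> F"
      unfolding shiftable_def by auto
    show ?thesis
    proof (cases "x = a")
      case True
      with h 2 e have g: "g = e - {j}"
        unfolding shift_def by auto
      then have "g \<in> lower_shadow F"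
        using e unfolding lower_shadow_def by blast
      moreover have "\<not> shiftable a j (lower_shadow F) g"
        using g unfolding shiftable_def by auto
      ultimately show ?thesis by (rule compressionI_unshifted)
    next
      case False
      with h 2 have x: "x \<in> e" "x \<noteq> j"
        unfolding shift_def by auto
      define g' where "g' = e - {x}"
      have g': "g' \<in> lower_shadow F" "j \<in> g'" "a \<notin> g'" "shift a j g' = g"
        using x e h 2 False unfolding g'_def lower_shadow_def shift_def by auto
      show ?thesis
      proof (cases "g \<in> lower_shadow F")
        case True
        have "a \<in> g" using g'(4) unfolding shift_def by auto
        then have "\<not> shiftable a j (lower_shadow F) g"
          unfolding shiftable_def by auto
        with True show ?thesis by (rule compressionI_unshifted)
      next
        case False
        then have "shiftable a j (lower_shadow F) g'"
          using g' unfolding shiftable_def by auto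
        then show ?thesis using g'(4) compressionI_shifted by metis
      qed
    qed
  qed
qed

lemma card_lower_shadow_compression_le:
  assumes "uniform_family k F"
  shows "card (lower_shadow (compression a j F)) \<le> card (lower_shadow F)"
proof -
  have "finite (compression a j (lower_shadow F))"
    using finite_lower_shadow[OF assms] unfolding compression_def by simp
  then have "card (lower_shadow (compression a j F)) \<le> card (compression a j (lower_shadow F))"
    using lower_shadow_compression_subset by (rule card_mono)
  then show ?thesis
    by (simp add: card_compression)
qed

lemma card_containing_compression_less:
  assumes "finite F" "shiftable a j F e"
  shows "card {g\<in>F. a \<in> g} < card {g\<in>compression a j F. a \<in> g}"
proof (rule psubset_card_mono)
  show "finite {g\<in>compression a j F. a \<in> g}"
    using assms unfolding compression_def by auto
  have "{g\<in>F. a \<in> g} \<subseteq> {g\<in>compression a j F. a \<in> g}"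
    using compressionI_unshifted[of _ F a j] by (auto simp: shiftable_def)
  moreover have "shift a j e \<in> {g\<in>compression a j F. a \<in> g} - {g\<in>F. a \<in> g}"
    using assms(2) compressionI_shifted[OF assms(2)] by (auto simp: shiftable_def shift_def)
  ultimately show "{g\<in>F. a \<in> g} \<subset> {g\<in>compression a j F. a \<in> g}"
    by blast
qed

text \<open>Compress towards \<open>a\<close> for as long as possible: each compression strictly increases the
  number of members containing \<open>a\<close>, which is bounded by the size of the family.\<close>
lemma obtain_shift_stable:
  assumes "uniform_family k F" "a \<in> \<Union>F"
  obtains G where "uniform_family k G" "card G = card F"
    "card (lower_shadow G) \<le> card (lower_shadow F)" "a \<in> \<Union>G" "shift_stable a G"
proof -
  define P where "P G \<longleftrightarrow> uniform_family k G \<and> card G = card F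
    \<and> card (lower_shadow G) \<le> card (lower_shadow F) \<and> card {e\<in>F. a \<in> e} \<le> card {e\<in>G. a \<in> e}"
    for G
  have "P F"
    unfolding P_def using assms by auto
  moreover have "\<forall>G. P G \<longrightarrow> card {e\<in>G. a \<in> e} < card F + 1"
    unfolding P_def uniform_family_def
    by (metis (no_types, lifting) card_mono less_Suc_eq_le mem_Collect_eq subsetI Suc_eq_plus1)
  ultimately obtain G where G: "P G" and G_max: "\<forall>H. P H \<longrightarrow> card {e\<in>H. a \<in> e} \<le> card {e\<in>G. a \<in> e}"
    using ex_has_greatest_nat[of P F "\<lambda>G. card {e\<in>G. a \<in> e}"] by blast
  have "shift_stable a G"
    unfolding shift_stable_def
  proof (intro ballI impI, rule ccontr)
    fix e j assume "e \<in> G" "j \<in> e" "a \<notin> e" "shift a j e \<notin> G"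
    then have sh: "shiftable a j G e"
      unfolding shiftable_def by auto
    have uG: "uniform_family k G"
      using G unfolding P_def by auto
    then have less: "card {e\<in>G. a \<in> e} < card {e\<in>compression a j G. a \<in> e}"
      using card_containing_compression_less[OF _ sh] unfolding uniform_family_def by auto
    have "P (compression a j G)"
      using G less uniform_family_compression[OF uG]
        le_trans[OF card_lower_shadow_compression_le[OF uG]]
      unfolding P_def card_compression by auto
    with G_max less show False by fastforce
  qed
  moreover have "a \<in> \<Union>G"
  proof -
    obtain e where "e \<in> F" "a \<in> e" using assms(2) by blast
    then have "0 < card {e\<in>F. a \<in> e}"
      using assms(1) unfolding uniform_family_def by (auto simp: card_gt_0_iff)
    then have "card {e\<in>G. a \<in> e} \<noteq> 0"
      using G unfolding P_def by linarith
    then show ?thesis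
      by (metis (no_types, lifting) UnionI card.empty empty_Collect_eq)
  qed
  ultimately show ?thesis
    using G that unfolding P_def by blast
qed

subsection \<open>Lov\'asz' form of the Kruskal--Katona theorem\<close>

definition link :: "'a \<Rightarrow> 'a set set \<Rightarrow> 'a set set" where
  "link a F = (\<lambda>e. e - {a}) ` {e\<in>F. a \<in> e}"

definition deletion :: "'a \<Rightarrow> 'a set set \<Rightarrow> 'a set set" where
  "deletion a F = {e\<in>F. a \<notin> e}"

lemma card_link: "card (link a F) = card {e\<in>F. a \<in> e}"
  unfolding link_def by (rule card_image, rule inj_onI) blast

lemma card_deletion_add_card_link:
  assumes "finite F" shows "card (deletion a F) + card (link a F) = card F"
proof -
  have "F = deletion a F \<union> {e\<in>F. a \<in> e}" "deletion a F \<inter> {e\<in>F. a \<in> e} = {}"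
    unfolding deletion_def by auto
  then show ?thesis
    using assms by (metis card_Un_disjoint card_link finite_Un)
qed

lemma link_nonempty: "a \<in> \<Union>F \<Longrightarrow> link a F \<noteq> {}"
  unfolding link_def by blast

lemma uniform_family_deletion: "uniform_family k F \<Longrightarrow> uniform_family k (deletion a F)"
  unfolding uniform_family_def deletion_def by auto

lemma uniform_family_link:
  "uniform_family (Suc k) F \<Longrightarrow> uniform_family k (link a F)"
  unfolding uniform_family_def link_def by auto

lemma lower_shadow_deletion_subset_link:
  assumes "shift_stable a F" shows "lower_shadow (deletion a F) \<subseteq> link a F"
proof
  fix f assume "f \<in> lower_shadow (deletion a F)"
  then obtain e j where e: "e \<in> F" "a \<notin> e" "j \<in> e" "f = e - {j}"
    unfolding lower_shadow_def deletion_def by auto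
  then have "shift a j e \<in> F" "a \<in> shift a j e" "f = shift a j e - {a}"
    using assms unfolding shift_stable_def shift_def by auto
  then show "f \<in> link a F"
    unfolding link_def by blast
qed

text \<open>Members of the link, and the members of its shadow with \<open>a\<close> added back, are
  disjoint parts of the shadow of \<open>F\<close>.\<close>
lemma card_link_add_card_lower_shadow_link_le:
  assumes "uniform_family k F"
  shows "card (link a F) + card (lower_shadow (link a F)) \<le> card (lower_shadow F)"
proof -
  have sub: "link a F \<union> insert a ` lower_shadow (link a F) \<subseteq> lower_shadow F"
  proof safe
    fix f assume "f \<in> link a F"
    then show "f \<in> lower_shadow F"
      unfolding link_def lower_shadow_def by blast
  next
    fix f assume "f \<in> lower_shadow (link a F)"
    then obtain e y where "e \<in> F" "a \<in> e" "y \<in> e - {a}" "f = e - {a} - {y}"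
      unfolding lower_shadow_def link_def by auto
    then have "e \<in> F" "y \<in> e" "insert a f = e - {y}"
      by auto
    then show "insert a f \<in> lower_shadow F"
      unfolding lower_shadow_def by blast
  qed
  have fin: "finite (link a F \<union> insert a ` lower_shadow (link a F))"
    using finite_subset[OF sub finite_lower_shadow[OF assms]] .
  have "a \<notin> f" if "f \<in> lower_shadow (link a F)" for f
    using that unfolding lower_shadow_def link_def by auto
  then have "inj_on (insert a) (lower_shadow (link a F))"
    by (intro inj_onI) (metis insert_ident)
  moreover have "link a F \<inter> insert a ` lower_shadow (link a F) = {}"
    unfolding link_def by auto
  ultimately have "card (link a F) + card (lower_shadow (link a F))
      = card (link a F \<union> insert a ` lower_shadow (link a F))"
    using fin by (simp add: card_Un_disjoint card_image)
  also have "\<dots> \<le> card (lower_shadow F)"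
    using card_mono[OF finite_lower_shadow[OF assms] sub] .
  finally show ?thesis .
qed

lemma gbinomial_nonneg:
  fixes x :: real assumes "real k - 1 \<le> x" shows "0 \<le> x gchoose k"
  unfolding gbinomial_prod_rev using assms by (intro divide_nonneg_pos prod_nonneg) auto

lemma gbinomial_le_Suc:
  fixes x :: real assumes "real k \<le> x" "x \<le> real k + 1" shows "x gchoose k \<le> real k + 1"
  using gbinomial_mono[OF assms(1), of "real (Suc k)"] assms(2)
  by (metis binomial_Suc_n binomial_gbinomial of_nat_Suc add.commute)

text \<open>After shifting towards a vertex \<open>a\<close>, the shadow of the deletion lies in the link, so by the inner
  hypothesis the link cannot be smaller than \<open>(x - 1) gchoose Suc k\<close>; the outer hypothesis
  applied to the link and Pascal's rule then finish the proof.\<close>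
lemma lovasz_kruskal_katona_step:
  fixes F :: "'a set set" and x :: real
  assumes IH: "\<And>(F :: 'a set set) x. uniform_family (Suc k) F \<Longrightarrow> F \<noteq> {} \<Longrightarrow> real k \<le> x
      \<Longrightarrow> x gchoose Suc k \<le> card F \<Longrightarrow> x gchoose k \<le> card (lower_shadow F)"
  shows "uniform_family (Suc (Suc k)) F \<Longrightarrow> F \<noteq> {} \<Longrightarrow> real (Suc k) \<le> x
      \<Longrightarrow> x gchoose Suc (Suc k) \<le> card F \<Longrightarrow> x gchoose Suc k \<le> card (lower_shadow F)"
proof (induction "card F" arbitrary: F x rule: less_induct)
  case less
  note F = less.prems
  obtain e where e: "e \<in> F" using F(2) by blast
  show ?case
  proof (cases "x \<le> real (Suc k) + 1")
    case True
    then show ?thesis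
      using gbinomial_le_Suc[OF F(3)] card_lower_shadow_ge[OF F(1) e] by simp
  next
    case False
    then have x: "real (Suc k) \<le> x - 1" by simp
    have "e \<noteq> {}"
      using F(1) e unfolding uniform_family_def by auto
    then obtain a where "a \<in> \<Union>F" using e by blast
    then obtain G where G: "uniform_family (Suc (Suc k)) G" "card G = card F"
      "card (lower_shadow G) \<le> card (lower_shadow F)" "a \<in> \<Union>G" "shift_stable a G"
      using obtain_shift_stable[OF F(1)] by blast
    have finG: "finite G"
      using G(1) unfolding uniform_family_def by simp
    have pascal: "x gchoose Suc (Suc k) = ((x - 1) gchoose Suc k) + ((x - 1) gchoose Suc (Suc k))"
      "x gchoose Suc k = ((x - 1) gchoose k) + ((x - 1) gchoose Suc k)"
      using gbinomial_Suc_Suc[of "x - 1"] by simp_all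
    have "0 < card (link a G)"
      using link_nonempty[OF G(4)] finG unfolding link_def by (simp add: card_gt_0_iff)
    have link_large: "(x - 1) gchoose Suc k \<le> card (link a G)"
    proof (rule ccontr)
      assume small: "\<not> ?thesis"
      have del_large: "(x - 1) gchoose Suc (Suc k) < card (deletion a G)"
        using card_deletion_add_card_link[OF finG, of a] G(2) F(4) pascal(1) small by linarith
      then have "deletion a G \<noteq> {}"
        using gbinomial_nonneg[of "Suc (Suc k)" "x - 1"] x by auto
      moreover have "card (deletion a G) < card F"
        using card_deletion_add_card_link[OF finG, of a] G(2) \<open>0 < card (link a G)\<close> by linarith
      ultimately have "(x - 1) gchoose Suc k \<le> card (lower_shadow (deletion a G))"
        using less.hyps uniform_family_deletion[OF G(1)] x del_large by auto
      also have "\<dots> \<le> card (link a G)"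
        using card_mono[OF _ lower_shadow_deletion_subset_link[OF G(5)]] finG
        unfolding link_def by simp
      finally show False using small by simp
    qed
    have "(x - 1) gchoose k \<le> card (lower_shadow (link a G))"
      using IH[OF uniform_family_link[OF G(1)] link_nonempty[OF G(4)]] x link_large by simp
    then have "x gchoose Suc k \<le> card (link a G) + card (lower_shadow (link a G))"
      using pascal(2) link_large by simp
    also have "\<dots> \<le> card (lower_shadow F)"
      using card_link_add_card_lower_shadow_link_le[OF G(1), of a] G(3) by linarith
    finally show ?thesis .
  qed
qed

theorem lovasz_kruskal_katona:
  fixes F :: "'a set set" and x :: real
  assumes "uniform_family (Suc k) F" "F \<noteq> {}" "real k \<le> x" "x gchoose Suc k \<le> card F"
  shows "x gchoose k \<le> card (lower_shadow F)"
  using assms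
proof (induction k arbitrary: F x)
  case 0
  then obtain e where "e \<in> F" by blast
  then show ?case
    using card_lower_shadow_ge[OF "0.prems"(1)] by simp
next
  case (Suc k)
  show ?case
    by (rule lovasz_kruskal_katona_step[OF Suc.IH Suc.prems])
qed

subsection \<open>Bounding the Lagrangian on the \<open>\<alpha>\<close>-sphere\<close>

lemma power_Suc_add_ge:
  fixes s t :: real assumes "0 \<le> s" "0 \<le> t"
  shows "s ^ Suc m + real (Suc m) * t * s ^ m \<le> (s + t) ^ Suc m"
proof (induction m)
  case 0
  then show ?case by simp
next
  case (Suc m)
  have "s ^ Suc (Suc m) + real (Suc (Suc m)) * t * s ^ Suc m
      \<le> (s + t) * (s ^ Suc m + real (Suc m) * t * s ^ m)"
    using assms by (simp add: algebra_simps)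
  also have "\<dots> \<le> (s + t) ^ Suc (Suc m)"
    using Suc assms by (simp add: mult_left_mono)
  finally show ?case .
qed

lemma ksubsets_insert:
  assumes "finite I" "a \<notin> I"
  shows "{e. e \<subseteq> insert a I \<and> card e = Suc k}
       = {e. e \<subseteq> I \<and> card e = Suc k} \<union> insert a ` {e. e \<subseteq> I \<and> card e = k}"
proof -
  have "e \<in> insert a ` {e. e \<subseteq> I \<and> card e = k}"
    if "e \<subseteq> insert a I" "card e = Suc k" "a \<in> e" for e
  proof -
    have "finite e" using that(1) assms(1) finite_subset by blast
    then have "e = insert a (e - {a})" "e - {a} \<subseteq> I" "card (e - {a}) = k"
      using that assms(2) by auto
    then show ?thesis by blast
  qed
  moreover have "card (insert a e) = Suc k" if "e \<subseteq> I" "card e = k" for e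
    using that assms finite_subset by (metis card_insert_disjoint subsetD)
  ultimately show ?thesis by auto
qed

text \<open>Maclaurin-type bound: each product over a \<open>k\<close>-subset occurs \<open>k!\<close> times among the
  nonnegative terms of the expansion of \<open>(\<Sum>i\<in>I. w i) ^ k\<close>.\<close>
lemma fact_mult_sum_ksubsets_prod_le_power:
  fixes w :: "'a \<Rightarrow> real"
  assumes "finite I" "\<And>i. i \<in> I \<Longrightarrow> 0 \<le> w i"
  shows "fact k * (\<Sum>e | e \<subseteq> I \<and> card e = k. \<Prod>i\<in>e. w i) \<le> (\<Sum>i\<in>I. w i) ^ k"
  using assms
proof (induction I arbitrary: k rule: finite_induct)
  case empty
  have ksubsets: "{e. e \<subseteq> {} \<and> card e = k} = (if k = 0 then {{}} else {})" by auto
  show ?case unfolding ksubsets by (cases k) simp_all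
next
  case (insert a I)
  define P where "P j = (\<Sum>e | e \<subseteq> I \<and> card e = j. \<Prod>i\<in>e. w i)" for j
  define s where "s = (\<Sum>i\<in>I. w i)"
  have w: "0 \<le> w a" "\<And>i. i \<in> I \<Longrightarrow> 0 \<le> w i"
    using insert.prems by auto
  have s: "0 \<le> s" unfolding s_def using w by (simp add: sum_nonneg)
  have IH: "fact j * P j \<le> s ^ j" for j
    using insert.IH[OF w(2)] unfolding P_def s_def by blast
  show ?case
  proof (cases k)
    case 0
    have "{e. e \<subseteq> insert a I \<and> card e = 0} = {{}}"
      using insert.hyps(1) by (auto dest: finite_subset)
    then show ?thesis using 0 by simp
  next
    case (Suc m)
    have inj: "inj_on (insert a) {e. e \<subseteq> I \<and> card e = m}"
      using insert.hyps(2) by (intro inj_onI) (metis insert_ident subsetD mem_Collect_eq)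
    have "(\<Sum>e\<in>insert a ` {e. e \<subseteq> I \<and> card e = m}. \<Prod>i\<in>e. w i)
        = (\<Sum>e | e \<subseteq> I \<and> card e = m. w a * (\<Prod>i\<in>e. w i))"
      unfolding sum.reindex[OF inj] comp_def
      using insert.hyps by (intro sum.cong) (auto simp: prod.insert_if finite_subset subset_iff)
    then have split: "(\<Sum>e | e \<subseteq> insert a I \<and> card e = Suc m. \<Prod>i\<in>e. w i) = P (Suc m) + w a * P m"
      unfolding ksubsets_insert[OF insert.hyps] P_def sum_distrib_left[symmetric]
      using insert.hyps by (subst sum.union_disjoint) auto
    have "fact (Suc m) * (P (Suc m) + w a * P m)
        = fact (Suc m) * P (Suc m) + real (Suc m) * w a * (fact m * P m)"
      by (simp add: algebra_simps)
    also have "\<dots> \<le> s ^ Suc m + real (Suc m) * w a * s ^ m"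
      using w by (intro add_mono mult_left_mono IH) auto
    also have "\<dots> \<le> (s + w a) ^ Suc m"
      using power_Suc_add_ge[OF s w(1)] .
    finally show ?thesis
      using split Suc insert.hyps unfolding s_def by (simp add: add.commute)
  qed
qed

lemma sum_le_card_powr_mult_sum_powr:
  fixes z :: "'a \<Rightarrow> real"
  assumes "finite S" "\<And>e. e \<in> S \<Longrightarrow> 0 \<le> z e" "1 \<le> p"
  shows "(\<Sum>e\<in>S. z e) \<le> card S powr (1 - 1/p) * (\<Sum>e\<in>S. z e powr p) powr (1/p)"
proof -
  \<comment> \<open>\<open>powr_convex\<close> only covers \<open>{0<..}\<close>, so the zero terms are dropped first.\<close>
  define S' where "S' = {e\<in>S. 0 < z e}"
  have S': "finite S'" "S' \<subseteq> S"
    using assms(1) unfolding S'_def by auto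
  have "(\<Sum>e\<in>S. z e) = (\<Sum>e\<in>S'. z e)"
    using assms(1,2) unfolding S'_def by (intro sum.mono_neutral_right) force+
  show ?thesis
  proof (cases "S' = {}")
    case True
    then show ?thesis
      using \<open>(\<Sum>e\<in>S. z e) = _\<close> by simp
  next
    case False
    define m where "m = real (card S')"
    define A where "A = (\<Sum>e\<in>S'. z e)"
    define B where "B = (\<Sum>e\<in>S'. z e powr p)"
    have m: "0 < m" unfolding m_def using False S' by (simp add: card_gt_0_iff)
    have A: "0 \<le> A" unfolding A_def S'_def by (intro sum_nonneg) auto
    have B: "0 \<le> B" unfolding B_def by (intro sum_nonneg) auto
    have "(\<Sum>e\<in>S'. (1/m) *\<^sub>R z e) powr p \<le> (\<Sum>e\<in>S'. (1/m) * z e powr p)"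
      using convex_on_sum[OF S'(1) False powr_convex[OF assms(3)], of "\<lambda>_. 1/m" z] m
      unfolding m_def S'_def by auto
    then have "(A / m) powr p \<le> B / m"
      unfolding A_def B_def by (simp add: sum_distrib_left[symmetric] divide_inverse mult.commute)
    then have "((A / m) powr p) powr (1/p) \<le> (B / m) powr (1/p)"
      using assms(3) by (intro powr_mono2) auto
    then have "A / m \<le> B powr (1/p) / m powr (1/p)"
      using assms(3) A m by (simp add: powr_powr powr_divide)
    then have "A \<le> m powr (1 - 1/p) * B powr (1/p)"
      using m by (simp add: field_simps powr_diff)
    also have "\<dots> \<le> card S powr (1 - 1/p) * (\<Sum>e\<in>S. z e powr p) powr (1/p)"
    proof (intro mult_mono powr_mono2)
      show "m \<le> real (card S)"
        unfolding m_def using card_mono[OF assms(1) S'(2)] by simp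
      show "B \<le> (\<Sum>e\<in>S. z e powr p)"
        unfolding B_def by (rule sum_mono2[OF assms(1) S'(2)]) auto
    qed (use assms(3) m B in auto)
    finally show ?thesis
      using \<open>(\<Sum>e\<in>S. z e) = _\<close> unfolding A_def by simp
  qed
qed

lemma uniform_family_if_uniform_hypergraph:
  assumes "uniform_hypergraph n k E" shows "uniform_family k E"
proof -
  have "E \<subseteq> Pow {..<n}"
    using assms unfolding uniform_hypergraph_def by auto
  then show ?thesis
    using assms unfolding uniform_hypergraph_def uniform_family_def
    by (meson finite_Pow_iff finite_lessThan finite_subset)
qed

lemma tau_le_on_alpha_sphere:
  assumes "1 < \<alpha>" "uniform_hypergraph n k E" "alpha_norm n \<alpha> y = 1"
  shows "tau k E y \<le> (fact k * card E) powr (1 - 1/\<alpha>)"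
proof -
  define w where "w i = \<bar>y i\<bar> powr \<alpha>" for i
  define z where "z e = (\<Prod>i\<in>e. \<bar>y i\<bar>)" for e
  have "(\<Sum>i<n. w i) powr (1/\<alpha>) = 1"
    using assms(3) unfolding alpha_norm_def w_def .
  then have "((\<Sum>i<n. w i) powr (1/\<alpha>)) powr \<alpha> = 1"
    by simp
  then have w_sum: "(\<Sum>i<n. w i) = 1"
    using assms(1) by (simp add: powr_powr w_def sum_nonneg)
  have finE: "finite E"
    using uniform_family_if_uniform_hypergraph[OF assms(2)] unfolding uniform_family_def ..
  have E_sub: "E \<subseteq> {e. e \<subseteq> {..<n} \<and> card e = k}"
    using assms(2) unfolding uniform_hypergraph_def by auto
  have "fact k * (\<Sum>e\<in>E. z e powr \<alpha>) = fact k * (\<Sum>e\<in>E. \<Prod>i\<in>e. w i)"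
    unfolding z_def w_def by (simp add: prod_powr_distrib)
  also have "\<dots> \<le> fact k * (\<Sum>e | e \<subseteq> {..<n} \<and> card e = k. \<Prod>i\<in>e. w i)"
    using E_sub by (intro mult_left_mono sum_mono2) (auto simp: w_def prod_nonneg)
  also have "\<dots> \<le> 1"
    using fact_mult_sum_ksubsets_prod_le_power[of "{..<n}" w k] w_sum by (simp add: w_def)
  finally have z_powr: "(\<Sum>e\<in>E. z e powr \<alpha>) \<le> 1 / fact k"
    by (simp add: field_simps)
  have "tau k E y \<le> fact k * (\<Sum>e\<in>E. z e)"
    unfolding tau_def z_def by (intro mult_left_mono sum_mono) (auto simp flip: abs_prod)
  also have "\<dots> \<le> fact k * (card E powr (1 - 1/\<alpha>) * (\<Sum>e\<in>E. z e powr \<alpha>) powr (1/\<alpha>))"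
    using assms(1) by (intro mult_left_mono sum_le_card_powr_mult_sum_powr finE)
      (auto simp: z_def prod_nonneg)
  also have "\<dots> \<le> fact k * (card E powr (1 - 1/\<alpha>) * (1 / fact k) powr (1/\<alpha>))"
    using z_powr assms(1) by (intro mult_left_mono powr_mono2) (auto intro: sum_nonneg)
  also have "\<dots> = (fact k * card E) powr (1 - 1/\<alpha>)"
    by (simp add: powr_divide powr_diff powr_mult)
  finally show ?thesis .
qed

lemma lambda_alpha_le:
  assumes "1 < \<alpha>" "uniform_hypergraph n k E" "0 < n"
  shows "lambda_alpha n k \<alpha> E \<le> (fact k * card E) powr (1 - 1/\<alpha>)"
  unfolding lambda_alpha_def
proof (rule cSup_least)
  define e0 :: "nat \<Rightarrow> real" where "e0 i = (if i = 0 then 1 else 0)" for i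
  have "(\<Sum>i<n. \<bar>e0 i\<bar> powr \<alpha>) = (\<Sum>i<n. if i = 0 then 1 else 0)"
    unfolding e0_def by (intro sum.cong) auto
  also have "\<dots> = 1"
    using assms(3) by simp
  finally have "(\<Sum>i<n. \<bar>e0 i\<bar> powr \<alpha>) = 1" .
  then have "alpha_norm n \<alpha> e0 = 1"
    unfolding alpha_norm_def by simp
  then show "{tau k E y |y. alpha_norm n \<alpha> y = 1} \<noteq> {}"
    by blast
qed (use tau_le_on_alpha_sphere[OF assms(1,2)] in blast)

lemma shadow_eq_lower_shadow:
  assumes "1 \<le> k" "uniform_family k E" shows "shadow k E = lower_shadow E"
proof (intro equalityI subsetI)
  fix f assume "f \<in> shadow k E"
  then obtain e where f: "card f = k - 1" "e \<in> E" "f \<subseteq> e"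
    unfolding shadow_def by auto
  have "finite e" "card e = k"
    using assms(2) f unfolding uniform_family_def by auto
  then have "card (e - f) = 1"
    using f assms(1) by (simp add: card_Diff_subset finite_subset)
  then obtain x where "e - f = {x}"
    using card_1_singletonE by blast
  then have "f = e - {x}" "x \<in> e"
    using f by auto
  then show "f \<in> lower_shadow E"
    using f unfolding lower_shadow_def by blast
next
  fix f assume "f \<in> lower_shadow E"
  then obtain e x where "e \<in> E" "x \<in> e" "f = e - {x}"
    unfolding lower_shadow_def by auto
  moreover from this have "card f = k - 1"
    using assms(2) unfolding uniform_family_def by auto
  ultimately show "f \<in> shadow k E"
    unfolding shadow_def by auto
qed

theorem corollary6:
  fixes n k :: nat and \<alpha> x :: real and E :: "nat set set"
  assumes "k \<ge> 1"
    and "uniform_hypergraph n k E"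
    and "E \<noteq> {}"
    and "\<alpha> > 1"
    and "x \<ge> real k - 1"
    and "lambda_alpha n k \<alpha> E \<ge> (fact k * (x gchoose k)) powr (1 - 1 / \<alpha>)"
  shows "real (card (shadow k E)) \<ge> x gchoose (k - 1)"
proof -
  obtain m where k: "k = Suc m" using assms(1) by (cases k) auto
  have uE: "uniform_family k E"
    using uniform_family_if_uniform_hypergraph[OF assms(2)] .
  have "0 < n"
    using assms(1-3) unfolding uniform_hypergraph_def by fastforce
  have p: "0 < 1 - 1/\<alpha>"
    using assms(4) by simp
  have "(fact k * (x gchoose k)) powr (1 - 1/\<alpha>) \<le> (fact k * card E) powr (1 - 1/\<alpha>)"
    using assms(6) lambda_alpha_le[OF assms(4,2) \<open>0 < n\<close>] by linarith
  moreover have "0 \<le> fact k * (x gchoose k)"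
    using gbinomial_nonneg[OF assms(5)] by simp
  ultimately have "fact k * (x gchoose k) \<le> fact k * card E"
    using powr_less_mono2[OF p, of "fact k * card E"] by (auto simp: not_le[symmetric])
  then have "x gchoose k \<le> card E"
    by simp
  then have "x gchoose m \<le> card (lower_shadow E)"
    using lovasz_kruskal_katona[of m E x] uE assms(3,5) k by simp
  then show ?thesis
    using shadow_eq_lower_shadow[OF assms(1) uE] k by simp
qed

end
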